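(* For every $n\ge 2$, $$f(n,n-1)=\sum_{j=0}^{n-1}\binom{n-j}{j}(-1)^j\,(n-1-j)!,$$ i.e. the number of upper-diagonal CNMs of size $n$ whose second diagonal $m_{1,n-1},m_{2,n-2},\dots,m_{n-1,1}$ consists entirely of zeros is given by this sum.
   Context: A complete non-ambiguous matrix (CNM) of size $n$ is an $n\times n$ matrix $M=(m_{i,j})$ with entries in $\{0,1\}$ whose support $T=\{(i,j): m_{i,j}=1\}$ (whose elements are called vertices) satisfies: (1) $(1,1)\in T$; (2) for every $p=(i,j)\in T$ with $p\neq(1,1)$, exactly one of the following holds: there is $(i',j)\in T$ with $i'<i$, or there is $(i,j')\in T$ with $j'<j$; (3) every row and every column of $M$ contains at least one vertex; (4) define the parent of $p=(i,j)\neq(1,1)$ to be $(i',j)$ with $i'<i$ maximal if such a vertex exists, and otherwise $(i,j')$ with $j'<j$ maximal; then every vertex is the parent of either zero or exactly two vertices. A vertex with no children is a leaf. A CNM of size $n$ is upper-diagonal if its leaves are exactly the positions $(i,n+1-i)$, $1\le i\le n$. $f(n,n-1)$ is the number of upper-diagonal CNMs of size $n$ with $m_{i,n-i}=0$ for all $1\le i\le n-1$. Binomial coefficients $\binom{a}{b}$ with $b>a\ge 0$ are $0$. *)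

theory Defs
  imports Main
begin

text \<open>A matrix of size n with 0/1 entries is identified with its support
  T \<subseteq> {1..n} \<times> {1..n} (positions (i,j), 1-based, of entries equal to 1).\<close>

definition cnm_parent :: "(nat \<times> nat) set \<Rightarrow> nat \<times> nat \<Rightarrow> nat \<times> nat" where
  "cnm_parent T p = (let (i, j) = p in
     if (\<exists>i'<i. (i', j) \<in> T) then (Max {i'. i' < i \<and> (i', j) \<in> T}, j)
     else (i, Max {j'. j' < j \<and> (i, j') \<in> T}))"

definition cnm_children :: "(nat \<times> nat) set \<Rightarrow> nat \<times> nat \<Rightarrow> (nat \<times> nat) set" where
  "cnm_children T p = {q \<in> T. q \<noteq> (1, 1) \<and> cnm_parent T q = p}"

definition is_CNM :: "nat \<Rightarrow> (nat \<times> nat) set \<Rightarrow> bool" where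
  "is_CNM n T \<longleftrightarrow>
     T \<subseteq> {1..n} \<times> {1..n} \<and>
     (1, 1) \<in> T \<and>
     (\<forall>(i, j) \<in> T. (i, j) \<noteq> (1, 1) \<longrightarrow>
        ((\<exists>i'<i. (i', j) \<in> T) \<noteq> (\<exists>j'<j. (i, j') \<in> T))) \<and>
     (\<forall>i \<in> {1..n}. \<exists>j. (i, j) \<in> T) \<and>
     (\<forall>j \<in> {1..n}. \<exists>i. (i, j) \<in> T) \<and>
     (\<forall>p \<in> T. card (cnm_children T p) = 0 \<or> card (cnm_children T p) = 2)"

definition cnm_leaves :: "(nat \<times> nat) set \<Rightarrow> (nat \<times> nat) set" where
  "cnm_leaves T = {p \<in> T. cnm_children T p = {}}"

definition upper_diagonal_CNM :: "nat \<Rightarrow> (nat \<times> nat) set \<Rightarrow> bool" where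
  "upper_diagonal_CNM n T \<longleftrightarrow> is_CNM n T \<and>
     cnm_leaves T = {(i, n + 1 - i) | i. 1 \<le> i \<and> i \<le> n}"

definition f_second_diag :: "nat \<Rightarrow> nat" where
  "f_second_diag n = card {T. upper_diagonal_CNM n T \<and>
     (\<forall>i. 1 \<le> i \<and> i \<le> n - 1 \<longrightarrow> (i, n - i) \<notin> T)}"

end

theory Submission
  imports Defs
begin

text \<open>An upper-diagonal CNM of size n lies in the staircase i + j \<le> n + 1, its leaves fill the
  antidiagonal, and it is characterised by the rule that every vertex other than (1,1) has a vertex
  above it or to its left, but not both. Relax the rule by giving every column outside a set U a
  virtual vertex in row 0. Peeling off the first row shows that there are prod (u - 1) over u in U
  such matrices; for U = {2..n} this counts the (n-1)! upper-diagonal CNMs.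

  Let h(n,t) count those with zeros at (i, n-i) for all i < t. If (t, n-t) is a vertex, then
  (t+1, n-t) and (t, n+1-t) are leaves, alone in their row and column respectively; deleting that
  row and column is a bijection onto the matrices of size n-1 with zeros at (i, n-1-i) for i < t-1.
  Hence h(n,t) = h(n,t+1) + h(n-1,t-1) with h(n,0) = h(n,1) = (n-1)!, and by Pascal's rule the
  alternating binomial sum satisfies the same recurrence.\<close>

section \<open>Staircase matrices with virtual roots\<close>

definition has_above :: "(nat \<times> nat) set \<Rightarrow> nat \<Rightarrow> nat \<Rightarrow> bool" where
  "has_above T i j \<longleftrightarrow> (\<exists>i'<i. (i', j) \<in> T)"

definition has_left :: "(nat \<times> nat) set \<Rightarrow> nat \<Rightarrow> nat \<Rightarrow> bool" where
  "has_left T i j \<longleftrightarrow> (\<exists>j'<j. (i, j') \<in> T)"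

definition staircase :: "nat \<Rightarrow> (nat \<times> nat) set" where
  "staircase s = {(i, j). 1 \<le> i \<and> 1 \<le> j \<and> i + j \<le> Suc s}"

definition antidiagonal_filled :: "nat \<Rightarrow> (nat \<times> nat) set \<Rightarrow> bool" where
  "antidiagonal_filled s T \<longleftrightarrow> (\<forall>i. 1 \<le> i \<and> i \<le> s \<longrightarrow> (i, Suc s - i) \<in> T)"

definition unique_parent :: "nat set \<Rightarrow> (nat \<times> nat) set \<Rightarrow> bool" where
  "unique_parent U T \<longleftrightarrow> (\<forall>i j. (i, j) \<in> T \<longrightarrow> (has_above T i j \<or> j \<notin> U) \<noteq> has_left T i j)"

text \<open>A column outside U behaves as if it had a virtual vertex in row 0.
  For U = {2..n} these are the upper-diagonal CNMs of size n: the virtual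
  vertex of column 1 turns (1,1) into the root.\<close>
definition stair_CNM :: "nat \<Rightarrow> nat set \<Rightarrow> (nat \<times> nat) set \<Rightarrow> bool" where
  "stair_CNM s U T \<longleftrightarrow> T \<subseteq> staircase s \<and> antidiagonal_filled s T \<and> unique_parent U T"

lemma finite_staircase: "finite (staircase s)"
  by (rule finite_subset[of _ "{0..Suc s} \<times> {0..Suc s}"]) (auto simp: staircase_def)

lemma finite_stair_CNMs: "finite {T. stair_CNM s U T}"
  by (rule finite_subset[of _ "Pow (staircase s)"]) (auto simp: stair_CNM_def finite_staircase)

lemma stair_CNM_staircase:
  "stair_CNM s U T \<Longrightarrow> (i, j) \<in> T \<Longrightarrow> 1 \<le> i \<and> 1 \<le> j \<and> i + j \<le> Suc s"
  by (auto simp: stair_CNM_def staircase_def)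

lemma stair_CNM_antidiagonal:
  "stair_CNM s U T \<Longrightarrow> 1 \<le> i \<Longrightarrow> i \<le> s \<Longrightarrow> (i, Suc s - i) \<in> T"
  by (auto simp: stair_CNM_def antidiagonal_filled_def)

lemma stair_CNM_unique_parent:
  "stair_CNM s U T \<Longrightarrow> (i, j) \<in> T \<Longrightarrow> (has_above T i j \<or> j \<notin> U) \<noteq> has_left T i j"
  by (auto simp: stair_CNM_def unique_parent_def)

lemma stair_CNM_0: "{T. stair_CNM 0 U T} = {{}}"
  by (auto simp: stair_CNM_def staircase_def antidiagonal_filled_def unique_parent_def)

lemma all_interval_Suc_shift:
  "(\<forall>i. 1 \<le> i \<and> i \<le> Suc s \<longrightarrow> P i) \<longleftrightarrow> P 1 \<and> (\<forall>i. 1 \<le> i \<and> i \<le> s \<longrightarrow> P (Suc i))"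
proof
  assume "\<forall>i. 1 \<le> i \<and> i \<le> Suc s \<longrightarrow> P i"
  then show "P 1 \<and> (\<forall>i. 1 \<le> i \<and> i \<le> s \<longrightarrow> P (Suc i))"
    by auto
next
  assume P: "P 1 \<and> (\<forall>i. 1 \<le> i \<and> i \<le> s \<longrightarrow> P (Suc i))"
  show "\<forall>i. 1 \<le> i \<and> i \<le> Suc s \<longrightarrow> P i"
  proof (intro allI impI)
    fix i
    assume "1 \<le> i \<and> i \<le> Suc s"
    then consider "i = 1" | "i = Suc (i - 1)" "1 \<le> i - 1" "i - 1 \<le> s"
      by linarith
    then show "P i"
      using P by cases metis+
  qed
qed

lemma antidiagonal_filled_Suc:
  "antidiagonal_filled (Suc s) T \<longleftrightarrow>
    (1, Suc s) \<in> T \<and> (\<forall>i. 1 \<le> i \<and> i \<le> s \<longrightarrow> (Suc i, Suc s - i) \<in> T)"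
  unfolding antidiagonal_filled_def all_interval_Suc_shift by simp

section \<open>Counting by the first row\<close>

definition first_row :: "(nat \<times> nat) set \<Rightarrow> nat set" where
  "first_row T = {j. (1, j) \<in> T}"

definition drop_first_row :: "(nat \<times> nat) set \<Rightarrow> (nat \<times> nat) set" where
  "drop_first_row T = {(i, j). 1 \<le> i \<and> (Suc i, j) \<in> T}"

definition add_first_row :: "nat set \<Rightarrow> (nat \<times> nat) set \<Rightarrow> (nat \<times> nat) set" where
  "add_first_row R T = {(1, j) | j. j \<in> R} \<union> {(Suc i, j) | i j. (i, j) \<in> T}"

definition rows_positive :: "(nat \<times> nat) set \<Rightarrow> bool" where
  "rows_positive T \<longleftrightarrow> (\<forall>i j. (i, j) \<in> T \<longrightarrow> 1 \<le> i)"

lemma stair_CNM_rows_positive: "stair_CNM s U T \<Longrightarrow> rows_positive T"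
  by (auto simp: rows_positive_def dest: stair_CNM_staircase)

lemma rows_positive_drop_first_row: "rows_positive (drop_first_row T)"
  by (simp add: rows_positive_def drop_first_row_def)

lemma first_row_add_first_row: "rows_positive T \<Longrightarrow> first_row (add_first_row R T) = R"
  by (auto simp: first_row_def add_first_row_def rows_positive_def)

lemma drop_first_row_add_first_row:
  "rows_positive T \<Longrightarrow> drop_first_row (add_first_row R T) = T"
  by (fastforce simp: drop_first_row_def add_first_row_def rows_positive_def)

lemma add_first_row_first_row:
  assumes "rows_positive T"
  shows "add_first_row (first_row T) (drop_first_row T) = T"
proof -
  have "(i, j) \<in> T \<Longrightarrow> i = 1 \<or> (\<exists>k. i = Suc k \<and> 1 \<le> k)" for i j
    using assms by (cases i) (auto simp: rows_positive_def)
  then show ?thesis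
    by (fastforce simp: first_row_def drop_first_row_def add_first_row_def)
qed

lemma all_add_first_row:
  assumes "rows_positive T"
  shows "(\<forall>i j. (i, j) \<in> add_first_row R T \<longrightarrow> P i j) \<longleftrightarrow>
    (\<forall>j\<in>R. P 1 j) \<and> (\<forall>i j. (i, j) \<in> T \<longrightarrow> P (Suc i) j)"
  by (auto simp: add_first_row_def)

context
  fixes R :: "nat set" and T :: "(nat \<times> nat) set"
  assumes rows: "rows_positive T"
begin

lemma has_above_add_first_row_1: "\<not> has_above (add_first_row R T) 1 j"
  by (auto simp: has_above_def add_first_row_def)

lemma has_left_add_first_row_1: "has_left (add_first_row R T) 1 j \<longleftrightarrow> (\<exists>j'\<in>R. j' < j)"
  using rows by (auto simp: has_left_def add_first_row_def rows_positive_def)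

lemma has_above_add_first_row_Suc:
  "1 \<le> i \<Longrightarrow> has_above (add_first_row R T) (Suc i) j \<longleftrightarrow> j \<in> R \<or> has_above T i j"
proof
  assume "has_above (add_first_row R T) (Suc i) j"
  then show "j \<in> R \<or> has_above T i j"
    by (auto simp: has_above_def add_first_row_def)
next
  assume "1 \<le> i" "j \<in> R \<or> has_above T i j"
  then show "has_above (add_first_row R T) (Suc i) j"
    unfolding has_above_def add_first_row_def by (auto intro: exI[of _ 1])
qed

lemma has_left_add_first_row_Suc:
  "1 \<le> i \<Longrightarrow> has_left (add_first_row R T) (Suc i) j \<longleftrightarrow> has_left T i j"
  by (auto simp: has_left_def add_first_row_def)

lemma staircase_add_first_row:
  "add_first_row R T \<subseteq> staircase (Suc s) \<longleftrightarrow> R \<subseteq> {1..Suc s} \<and> T \<subseteq> staircase s"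
  using all_add_first_row[OF rows, of R "\<lambda>i j. (i, j) \<in> staircase (Suc s)"] rows
  by (auto simp: subset_iff staircase_def rows_positive_def)

lemma antidiagonal_filled_add_first_row:
  "antidiagonal_filled (Suc s) (add_first_row R T) \<longleftrightarrow> Suc s \<in> R \<and> antidiagonal_filled s T"
proof -
  have "(1, j) \<in> add_first_row R T \<longleftrightarrow> j \<in> R" for j
    using rows by (auto simp: add_first_row_def rows_positive_def)
  moreover have "(Suc i, j) \<in> add_first_row R T \<longleftrightarrow> (i, j) \<in> T" if "1 \<le> i" for i j
    using that by (auto simp: add_first_row_def)
  ultimately show ?thesis
    unfolding antidiagonal_filled_Suc by (simp add: antidiagonal_filled_def)
qed

text \<open>A vertex of the first row lies above everything below it in its column, so for the
  remaining rows the columns in R behave like virtually rooted ones.\<close>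
lemma unique_parent_add_first_row:
  "unique_parent U (add_first_row R T) \<longleftrightarrow>
    (\<forall>j\<in>R. (j \<notin> U) \<noteq> (\<exists>j'\<in>R. j' < j)) \<and> unique_parent (U - R) T"
proof -
  have "(has_above (add_first_row R T) (Suc i) j \<or> j \<notin> U) \<noteq> has_left (add_first_row R T) (Suc i) j
    \<longleftrightarrow> (has_above T i j \<or> j \<notin> U - R) \<noteq> has_left T i j" if "(i, j) \<in> T" for i j
  proof -
    have "1 \<le> i"
      using rows that unfolding rows_positive_def by blast
    then show ?thesis
      by (auto simp: has_above_add_first_row_Suc has_left_add_first_row_Suc)
  qed
  then have "(\<forall>i j. (i, j) \<in> T \<longrightarrow>
      (has_above (add_first_row R T) (Suc i) j \<or> j \<notin> U) \<noteq> has_left (add_first_row R T) (Suc i) j)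
    \<longleftrightarrow> unique_parent (U - R) T"
    unfolding unique_parent_def by blast
  moreover have "(\<forall>j\<in>R. (has_above (add_first_row R T) 1 j \<or> j \<notin> U) \<noteq> has_left (add_first_row R T) 1 j)
    \<longleftrightarrow> (\<forall>j\<in>R. (j \<notin> U) \<noteq> (\<exists>j'\<in>R. j' < j))"
    by (simp only: has_above_add_first_row_1 has_left_add_first_row_1 simp_thms)
  ultimately show ?thesis
    unfolding unique_parent_def[of U] all_add_first_row[OF rows] by argo
qed

end

lemma first_row_rule_iff_Min:
  fixes R :: "nat set"
  assumes "finite R" "R \<noteq> {}"
  shows "(\<forall>j\<in>R. (j \<notin> U) \<noteq> (\<exists>j'\<in>R. j' < j)) \<longleftrightarrow> Min R \<notin> U \<and> (\<forall>j\<in>R. j \<noteq> Min R \<longrightarrow> j \<in> U)"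
proof -
  have "(\<exists>j'\<in>R. j' < j) \<longleftrightarrow> Min R < j" for j
    using Min_in[OF assms] Min_le[OF assms(1)] by (meson le_less_trans)
  moreover have "Min R < j \<longleftrightarrow> j \<noteq> Min R" if "j \<in> R" for j
    using Min_le[OF assms(1) that] by linarith
  ultimately show ?thesis
    using Min_in[OF assms] by blast
qed

text \<open>In the first row only the leftmost vertex lacks a left neighbour; so it must sit in a
  virtually rooted column and all others in genuine ones.\<close>
definition admissible_first_row :: "nat \<Rightarrow> nat set \<Rightarrow> nat set \<Rightarrow> bool" where
  "admissible_first_row N U R \<longleftrightarrow>
     R \<subseteq> {1..N} \<and> N \<in> R \<and> Min R \<notin> U \<and> (\<forall>j\<in>R. j \<noteq> Min R \<longrightarrow> j \<in> U)"

lemma stair_CNM_add_first_row_iff: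
  assumes "rows_positive T"
  shows "stair_CNM (Suc s) U (add_first_row R T) \<longleftrightarrow>
    admissible_first_row (Suc s) U R \<and> stair_CNM s (U - R) T"
proof (cases "R \<subseteq> {1..Suc s} \<and> Suc s \<in> R")
  case True
  then have "finite R" "R \<noteq> {}"
    using finite_subset by auto
  with True show ?thesis
    unfolding stair_CNM_def admissible_first_row_def staircase_add_first_row[OF assms]
      antidiagonal_filled_add_first_row[OF assms] unique_parent_add_first_row[OF assms]
      first_row_rule_iff_Min[OF \<open>finite R\<close> \<open>R \<noteq> {}\<close>]
    by (simp add: conj_ac)
next
  case False
  then show ?thesis
    unfolding stair_CNM_def admissible_first_row_def staircase_add_first_row[OF assms]
      antidiagonal_filled_add_first_row[OF assms]
    by blast
qed

lemma card_stair_CNM_Suc: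
  "card {T. stair_CNM (Suc s) U T} =
    (\<Sum>R | admissible_first_row (Suc s) U R. card {T. stair_CNM s (U - R) T})"
proof -
  let ?A = "{R. admissible_first_row (Suc s) U R}"
  let ?B = "SIGMA R:?A. {T. stair_CNM s (U - R) T}"
  have "bij_betw (\<lambda>T. (first_row T, drop_first_row T)) {T. stair_CNM (Suc s) U T} ?B"
  proof (rule bij_betw_byWitness[where f' = "\<lambda>(R, T). add_first_row R T"])
    show "(\<lambda>T. (first_row T, drop_first_row T)) ` {T. stair_CNM (Suc s) U T} \<subseteq> ?B"
    proof (rule image_subsetI)
      fix T
      assume "T \<in> {T. stair_CNM (Suc s) U T}"
      then have "stair_CNM (Suc s) U (add_first_row (first_row T) (drop_first_row T))"
        by (simp add: add_first_row_first_row stair_CNM_rows_positive)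
      then show "(first_row T, drop_first_row T) \<in> ?B"
        by (simp add: stair_CNM_add_first_row_iff rows_positive_drop_first_row)
    qed
  qed (auto simp: add_first_row_first_row first_row_add_first_row drop_first_row_add_first_row
      stair_CNM_rows_positive stair_CNM_add_first_row_iff)
  then have "card {T. stair_CNM (Suc s) U T} = card ?B"
    by (rule bij_betw_same_card)
  also have "\<dots> = (\<Sum>R\<in>?A. card {T. stair_CNM s (U - R) T})"
  proof (rule card_SigmaI)
    show "finite ?A"
      by (rule finite_subset[of _ "Pow {1..Suc s}"]) (auto simp: admissible_first_row_def)
  qed (simp add: finite_stair_CNMs)
  finally show ?thesis .
qed

lemma sum_prod_below_above:
  fixes V :: "nat set"
  assumes "V \<subseteq> {1..t}"
  shows "(\<Sum>a\<in>{1..t} - V. (\<Prod>u\<in>V \<inter> {..<a}. u - 1) * (\<Prod>u\<in>V \<inter> {a<..}. u)) = t * (\<Prod>u\<in>V. u - 1)"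
  using assms
proof (induction t arbitrary: V)
  case 0
  then show ?case by simp
next
  case (Suc t)
  show ?case
  proof (cases "Suc t \<in> V")
    case False
    then have V: "V \<subseteq> {1..t}"
      using Suc.prems by (auto simp: le_Suc_eq)
    have "{1..Suc t} - V = insert (Suc t) ({1..t} - V)" "V \<inter> {..<Suc t} = V" "V \<inter> {Suc t<..} = {}"
      using False V by auto
    then show ?thesis
      using Suc.IH[OF V] by simp
  next
    case True
    define V' where "V' = V - {Suc t}"
    have V': "V' \<subseteq> {1..t}" "finite V'" "Suc t \<notin> V'" and V: "V = insert (Suc t) V'"
      using Suc.prems True finite_subset by (auto simp: V'_def le_Suc_eq)
    have "(\<Prod>u\<in>V \<inter> {..<a}. u - 1) * (\<Prod>u\<in>V \<inter> {a<..}. u) =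
        Suc t * ((\<Prod>u\<in>V' \<inter> {..<a}. u - 1) * (\<Prod>u\<in>V' \<inter> {a<..}. u))" if "a \<in> {1..t}" for a
    proof -
      have "V \<inter> {..<a} = V' \<inter> {..<a}" "V \<inter> {a<..} = insert (Suc t) (V' \<inter> {a<..})"
        using that V by auto
      then show ?thesis
        using V' by (simp add: algebra_simps)
    qed
    moreover have "{1..Suc t} - V = {1..t} - V'"
      using V by auto
    ultimately have "(\<Sum>a\<in>{1..Suc t} - V. (\<Prod>u\<in>V \<inter> {..<a}. u - 1) * (\<Prod>u\<in>V \<inter> {a<..}. u))
        = (\<Sum>a\<in>{1..t} - V'. Suc t * ((\<Prod>u\<in>V' \<inter> {..<a}. u - 1) * (\<Prod>u\<in>V' \<inter> {a<..}. u)))"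
      by (intro sum.cong) auto
    also have "\<dots> = Suc t * (t * (\<Prod>u\<in>V'. u - 1))"
      by (simp only: sum_distrib_left[symmetric] Suc.IH[OF V'(1)])
    also have "\<dots> = Suc t * (\<Prod>u\<in>V. u - 1)"
      using V V' by simp
    finally show ?thesis .
  qed
qed

lemma sum_Pow_prod_pred:
  fixes V :: "nat set"
  assumes "finite V" "0 \<notin> V"
  shows "(\<Sum>W\<in>Pow V. \<Prod>u\<in>V - W. u - 1) = (\<Prod>u\<in>V. u)"
proof -
  have "u = 1 + (u - 1)" if "u \<in> V" for u
    using assms(2) that by (cases u) auto
  then have "(\<Prod>u\<in>V. u) = (\<Prod>u\<in>V. 1 + (u - 1))"
    by (intro prod.cong) auto
  also have "\<dots> = (\<Sum>W\<in>Pow V. (\<Prod>u\<in>W. 1) * (\<Prod>u\<in>V - W. u - 1))"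
    by (rule prod_add[OF assms(1)])
  finally show ?thesis by simp
qed

lemma admissible_first_rows_top_not_in:
  assumes "N \<notin> U" "1 \<le> N"
  shows "{R. admissible_first_row N U R} = {{N}}"
proof -
  have "R = {N}" if "admissible_first_row N U R" for R
  proof -
    have R: "R \<subseteq> {1..N}" "N \<in> R" "\<forall>j\<in>R. j \<noteq> Min R \<longrightarrow> j \<in> U"
      using that by (auto simp: admissible_first_row_def)
    then have "Min R = N"
      using assms(1) by metis
    moreover have "finite R"
      using R(1) finite_subset by blast
    ultimately have "\<forall>j\<in>R. N \<le> j"
      using Min_le by metis
    then show "R = {N}"
      using R(1,2) by fastforce
  qed
  moreover have "admissible_first_row N U {N}"
    using assms by (simp add: admissible_first_row_def)
  ultimately show ?thesis
    by blast
qed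

lemma bij_betw_admissible_first_rows:
  assumes "N \<in> U" "U \<subseteq> {1..N}"
  shows "bij_betw (\<lambda>(a, W). insert a (insert N W))
    (SIGMA a:{1..<N} - U. Pow (U \<inter> {a<..<N})) {R. admissible_first_row N U R}"
proof -
  have Min_first_row: "Min (insert a (insert N W)) = a"
    if "a \<in> {1..<N}" "W \<subseteq> U \<inter> {a<..<N}" for a W
    using that finite_subset[OF that(2)] assms(2) by (intro Min_eqI) (auto intro: finite_subset)
  show ?thesis
  proof (rule bij_betw_byWitness[where f' = "\<lambda>R. (Min R, R - {Min R, N})"])
    show "(\<lambda>(a, W). insert a (insert N W)) ` (SIGMA a:{1..<N} - U. Pow (U \<inter> {a<..<N}))
        \<subseteq> {R. admissible_first_row N U R}"
      using Min_first_row assms by (fastforce simp: admissible_first_row_def)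
    show "(\<lambda>R. (Min R, R - {Min R, N})) ` {R. admissible_first_row N U R}
        \<subseteq> (SIGMA a:{1..<N} - U. Pow (U \<inter> {a<..<N}))"
    proof (rule image_subsetI)
      fix R
      assume "R \<in> {R. admissible_first_row N U R}"
      then have R: "R \<subseteq> {1..N}" "N \<in> R" "Min R \<notin> U" "\<forall>j\<in>R. j \<noteq> Min R \<longrightarrow> j \<in> U"
        by (auto simp: admissible_first_row_def)
      moreover have "finite R"
        using R(1) finite_subset by blast
      ultimately have "Min R \<in> R" "\<forall>j\<in>R. Min R \<le> j"
        using Min_in by auto
      then show "(Min R, R - {Min R, N}) \<in> (SIGMA a:{1..<N} - U. Pow (U \<inter> {a<..<N}))"
        using R assms(1) by fastforce
    qed
  qed (use Min_first_row in \<open>auto simp: admissible_first_row_def intro: Min_in finite_subset\<close>)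
qed

lemma sum_admissible_first_rows_with_Min:
  fixes U :: "nat set"
  assumes U: "U \<subseteq> {1..N}" and a: "a \<in> {1..<N} - U"
  shows "(\<Sum>W\<in>Pow (U \<inter> {a<..<N}). \<Prod>u\<in>U - insert a (insert N W). u - 1) =
    (\<Prod>u\<in>U \<inter> {..<a}. u - 1) * (\<Prod>u\<in>U \<inter> {a<..<N}. u)"
proof -
  have finU: "finite U"
    using U finite_subset by blast
  have "U - insert a (insert N W) = (U \<inter> {..<a}) \<union> ((U \<inter> {a<..<N}) - W)"
    if "W \<subseteq> U \<inter> {a<..<N}" for W
  proof (intro equalityI subsetI)
    fix u
    assume u: "u \<in> U - insert a (insert N W)"
    then have "u < a \<or> a < u \<and> u < N"
      using U a by fastforce
    with u show "u \<in> (U \<inter> {..<a}) \<union> ((U \<inter> {a<..<N}) - W)"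
      by auto
  qed (use that a in auto)
  then have "(\<Sum>W\<in>Pow (U \<inter> {a<..<N}). \<Prod>u\<in>U - insert a (insert N W). u - 1) =
      (\<Sum>W\<in>Pow (U \<inter> {a<..<N}). (\<Prod>u\<in>U \<inter> {..<a}. u - 1) * (\<Prod>u\<in>(U \<inter> {a<..<N}) - W. u - 1))"
    using finU by (intro sum.cong refl, subst prod.union_disjoint[symmetric]) auto
  also have "\<dots> = (\<Prod>u\<in>U \<inter> {..<a}. u - 1) * (\<Prod>u\<in>U \<inter> {a<..<N}. u)"
    using sum_Pow_prod_pred[of "U \<inter> {a<..<N}"] U finU
    by (simp only: sum_distrib_left[symmetric]) auto
  finally show ?thesis .
qed

lemma sum_admissible_first_rows:
  assumes U: "U \<subseteq> {1..N}" and "1 \<le> N"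
  shows "(\<Sum>R | admissible_first_row N U R. \<Prod>u\<in>U - R. u - 1) = (\<Prod>u\<in>U. u - 1)"
proof (cases "N \<in> U")
  case False
  then have "U - {N} = U"
    by auto
  then show ?thesis
    using admissible_first_rows_top_not_in[OF False \<open>1 \<le> N\<close>] by simp
next
  case True
  have finU: "finite U"
    using U finite_subset by blast
  have "(\<Sum>R | admissible_first_row N U R. \<Prod>u\<in>U - R. u - 1) =
      (\<Sum>(a, W)\<in>(SIGMA a:{1..<N} - U. Pow (U \<inter> {a<..<N})). \<Prod>u\<in>U - insert a (insert N W). u - 1)"
    using sum.reindex_bij_betw[OF bij_betw_admissible_first_rows[OF True U],
        of "\<lambda>R. \<Prod>u\<in>U - R. u - 1"]
    by (simp add: case_prod_unfold)
  also have "\<dots> = (\<Sum>a\<in>{1..<N} - U. \<Sum>W\<in>Pow (U \<inter> {a<..<N}). \<Prod>u\<in>U - insert a (insert N W). u - 1)"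
    by (rule sum.Sigma[symmetric]) (auto intro: finite_subset[OF _ finU])
  also have "\<dots> = (\<Sum>a\<in>{1..<N} - U. (\<Prod>u\<in>U \<inter> {..<a}. u - 1) * (\<Prod>u\<in>U \<inter> {a<..<N}. u))"
    by (rule sum.cong[OF refl]) (rule sum_admissible_first_rows_with_Min[OF U])
  also have "\<dots> = (\<Sum>a\<in>{1..N - 1} - (U - {N}).
      (\<Prod>u\<in>(U - {N}) \<inter> {..<a}. u - 1) * (\<Prod>u\<in>(U - {N}) \<inter> {a<..}. u))"
  proof (rule sum.cong)
    show "{1..<N} - U = {1..N - 1} - (U - {N})"
      using True by auto
  next
    fix a
    assume "a \<in> {1..N - 1} - (U - {N})"
    then have "(U - {N}) \<inter> {..<a} = U \<inter> {..<a}" "(U - {N}) \<inter> {a<..} = U \<inter> {a<..<N}"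
      using U by auto
    then show "(\<Prod>u\<in>U \<inter> {..<a}. u - 1) * (\<Prod>u\<in>U \<inter> {a<..<N}. u) =
        (\<Prod>u\<in>(U - {N}) \<inter> {..<a}. u - 1) * (\<Prod>u\<in>(U - {N}) \<inter> {a<..}. u)"
      by simp
  qed
  also have "\<dots> = (N - 1) * (\<Prod>u\<in>U - {N}. u - 1)"
    using U by (intro sum_prod_below_above) auto
  also have "\<dots> = (\<Prod>u\<in>U. u - 1)"
    using True finU by (simp add: prod.remove)
  finally show ?thesis .
qed

theorem card_stair_CNM:
  "U \<subseteq> {1..s} \<Longrightarrow> card {T. stair_CNM s U T} = (\<Prod>u\<in>U. u - 1)"
proof (induction s arbitrary: U)
  case 0
  then show ?case
    by (simp add: stair_CNM_0)
next
  case (Suc s)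
  have "U - R \<subseteq> {1..s}" if "admissible_first_row (Suc s) U R" for R
    using Suc.prems that by (auto simp: admissible_first_row_def le_Suc_eq)
  then have "card {T. stair_CNM (Suc s) U T} = (\<Sum>R | admissible_first_row (Suc s) U R. \<Prod>u\<in>U - R. u - 1)"
    by (simp add: card_stair_CNM_Suc Suc.IH)
  also have "\<dots> = (\<Prod>u\<in>U. u - 1)"
    using Suc.prems by (intro sum_admissible_first_rows) auto
  finally show ?case .
qed

section \<open>Upper-diagonal CNMs as staircase matrices\<close>

lemma Max_less_eq_iff:
  fixes c :: nat
  assumes "\<exists>x<c. P x"
  shows "Max {x. x < c \<and> P x} = a \<longleftrightarrow> a < c \<and> P a \<and> (\<forall>x. a < x \<and> x < c \<longrightarrow> \<not> P x)"
proof -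
  have "finite {x. x < c \<and> P x}" "{x. x < c \<and> P x} \<noteq> {}"
    using assms by auto
  then show ?thesis
    by (subst Max_eq_iff) (auto simp: not_le)
qed

lemma cnm_parent_above:
  assumes "has_above T c d"
  shows "cnm_parent T (c, d) = (a, b) \<longleftrightarrow>
    b = d \<and> a < c \<and> (a, d) \<in> T \<and> (\<forall>i'. a < i' \<and> i' < c \<longrightarrow> (i', d) \<notin> T)"
  using assms Max_less_eq_iff[of c "\<lambda>i'. (i', d) \<in> T"]
  by (auto simp: cnm_parent_def has_above_def)

lemma cnm_parent_left:
  assumes "\<not> has_above T c d" "has_left T c d"
  shows "cnm_parent T (c, d) = (a, b) \<longleftrightarrow>
    a = c \<and> b < d \<and> (c, b) \<in> T \<and> (\<forall>j'. b < j' \<and> j' < d \<longrightarrow> (c, j') \<notin> T)"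
  using assms Max_less_eq_iff[of d "\<lambda>j'. (c, j') \<in> T"]
  by (auto simp: cnm_parent_def has_above_def has_left_def)

lemma cnm_parent_weight_less:
  assumes "has_above T c d \<or> has_left T c d" "cnm_parent T (c, d) = (a, b)"
  shows "a + b < c + d"
  using assms cnm_parent_above[of T c d a b] cnm_parent_left[of T c d a b]
  by (cases "has_above T c d") auto

lemma obtain_least_greater:
  fixes b x :: nat
  assumes "b < x" "P x"
  obtains d where "b < d" "P d" "\<forall>y. b < y \<and> y < d \<longrightarrow> \<not> P y"
proof -
  define d where "d = (LEAST y. b < y \<and> P y)"
  have "b < d" "P d"
    using LeastI[of "\<lambda>y. b < y \<and> P y", OF conjI[OF assms]] by (auto simp: d_def)
  moreover have "\<not> P y" if "b < y" "y < d" for y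
    using not_less_Least[of y "\<lambda>y. b < y \<and> P y"] that by (auto simp: d_def)
  ultimately show thesis
    using that by blast
qed

context
  fixes n :: nat and T :: "(nat \<times> nat) set"
  assumes stair: "stair_CNM n {2..n} T" and n: "1 \<le> n"
begin

lemma stair_CNM_root: "(1, 1) \<in> T"
proof -
  have "(1, n) \<in> T"
    using stair_CNM_antidiagonal[OF stair, of 1] n by simp
  then obtain j where j: "(1, j) \<in> T" "\<forall>j'. j' < j \<longrightarrow> (1, j') \<notin> T"
    using obtain_least_greater[of 0 n "\<lambda>j. (1, j) \<in> T"] n by (metis less_nat_zero_code not_gr0)
  have "\<not> has_above T 1 j"
    using stair_CNM_staircase[OF stair] by (fastforce simp: has_above_def)
  moreover have "\<not> has_left T 1 j"
    using j(2) by (simp add: has_left_def)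
  ultimately have "j \<notin> {2..n}"
    using stair_CNM_unique_parent[OF stair j(1)] by simp
  moreover have "1 \<le> j" "j \<le> n"
    using stair_CNM_staircase[OF stair j(1)] by auto
  ultimately show ?thesis
    using j(1) by (cases "j = 1") auto
qed

lemma stair_CNM_has_above_neq_has_left:
  assumes "(i, j) \<in> T" "(i, j) \<noteq> (1, 1)"
  shows "has_above T i j \<noteq> has_left T i j"
proof (cases "j = 1")
  case True
  with assms have "1 < i"
    using stair_CNM_staircase[OF stair assms(1)] by auto
  then have "has_above T i j"
    using stair_CNM_root True by (auto simp: has_above_def)
  moreover have "\<not> has_left T i j"
    using True stair_CNM_staircase[OF stair] by (fastforce simp: has_left_def)
  ultimately show ?thesis by simp
next
  case False
  then have "j \<in> {2..n}"
    using stair_CNM_staircase[OF stair assms(1)] by auto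
  then show ?thesis
    using stair_CNM_unique_parent[OF stair assms(1)] by simp
qed

lemma stair_CNM_children_antidiagonal:
  assumes "a + b = Suc n"
  shows "cnm_children T (a, b) = {}"
proof -
  have False if "(c, d) \<in> T" "(c, d) \<noteq> (1, 1)" "cnm_parent T (c, d) = (a, b)" for c d
  proof -
    have "has_above T c d \<or> has_left T c d"
      using stair_CNM_has_above_neq_has_left[OF that(1,2)] by auto
    then have "a + b < c + d"
      using cnm_parent_weight_less that(3) by blast
    then show False
      using stair_CNM_staircase[OF stair that(1)] assms by simp
  qed
  then show ?thesis
    unfolding cnm_children_def by auto
qed

lemma stair_CNM_children_nearest:
  assumes ab: "(a, b) \<in> T"
    and d: "b < d" "(a, d) \<in> T" "\<forall>y. b < y \<and> y < d \<longrightarrow> (a, y) \<notin> T"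
    and c: "a < c" "(c, b) \<in> T" "\<forall>x. a < x \<and> x < c \<longrightarrow> (x, b) \<notin> T"
  shows "cnm_children T (a, b) = {(a, d), (c, b)}"
proof (intro equalityI subsetI)
  fix p
  assume "p \<in> cnm_children T (a, b)"
  then obtain x y where p: "p = (x, y)" "(x, y) \<in> T" "(x, y) \<noteq> (1, 1)" "cnm_parent T (x, y) = (a, b)"
    unfolding cnm_children_def by (cases p) auto
  show "p \<in> {(a, d), (c, b)}"
  proof (cases "has_above T x y")
    case True
    then have "y = b" "a < x" "\<forall>i'. a < i' \<and> i' < x \<longrightarrow> (i', b) \<notin> T"
      using p(4) by (auto simp: cnm_parent_above)
    then show ?thesis
      using p(1,2) c by (metis insertCI linorder_neqE_nat)
  next
    case False
    then have "has_left T x y"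
      using stair_CNM_has_above_neq_has_left[OF p(2,3)] by simp
    then have "x = a" "b < y" "\<forall>j'. b < j' \<and> j' < y \<longrightarrow> (a, j') \<notin> T"
      using False p(4) by (auto simp: cnm_parent_left)
    then show ?thesis
      using p(1,2) d by (metis insertCI linorder_neqE_nat)
  qed
next
  have a1: "1 \<le> a" and b1: "1 \<le> b"
    using stair_CNM_staircase[OF stair ab] by simp_all
  have "has_left T a d"
    using ab d(1) by (auto simp: has_left_def)
  moreover from this have "\<not> has_above T a d"
    using stair_CNM_has_above_neq_has_left[OF d(2)] d(1) b1 by auto
  ultimately have "cnm_parent T (a, d) = (a, b)"
    using ab d by (simp add: cnm_parent_left)
  moreover have "cnm_parent T (c, b) = (a, b)"
    using ab c by (simp add: cnm_parent_above has_above_def exI[of _ a])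
  ultimately show "p \<in> cnm_children T (a, b)" if "p \<in> {(a, d), (c, b)}" for p
    using that d(1,2) c(1,2) a1 b1 by (auto simp: cnm_children_def)
qed

text \<open>The nearest vertices to the right of and below an inner vertex exist because its row and
  its column reach the antidiagonal.\<close>
lemma stair_CNM_children_inner:
  assumes ab: "(a, b) \<in> T" "a + b \<le> n"
  shows "card (cnm_children T (a, b)) = 2"
proof -
  have "1 \<le> a" "1 \<le> b"
    using stair_CNM_staircase[OF stair ab(1)] by auto
  then have "(a, Suc n - a) \<in> T" "(Suc n - b, b) \<in> T"
    using stair_CNM_antidiagonal[OF stair, of a] stair_CNM_antidiagonal[OF stair, of "Suc n - b"] ab(2)
    by simp_all
  moreover have "b < Suc n - a" "a < Suc n - b"
    using ab(2) by auto
  ultimately obtain d c where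
    "b < d" "(a, d) \<in> T" "\<forall>y. b < y \<and> y < d \<longrightarrow> (a, y) \<notin> T" and
    "a < c" "(c, b) \<in> T" "\<forall>x. a < x \<and> x < c \<longrightarrow> (x, b) \<notin> T"
    using obtain_least_greater[of b _ "\<lambda>y. (a, y) \<in> T"] obtain_least_greater[of a _ "\<lambda>x. (x, b) \<in> T"]
    by metis
  then show ?thesis
    using stair_CNM_children_nearest[OF ab(1)] by simp
qed

lemma upper_diagonal_CNM_if_stair_CNM: "upper_diagonal_CNM n T"
proof -
  have children: "cnm_children T (a, b) = {} \<longleftrightarrow> a + b = Suc n" if "(a, b) \<in> T" for a b
    using stair_CNM_staircase[OF stair that] stair_CNM_children_antidiagonal[of a b]
      stair_CNM_children_inner[OF that] by fastforce
  have "T \<subseteq> {1..n} \<times> {1..n}"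
    using stair_CNM_staircase[OF stair] by fastforce
  moreover have "\<forall>i \<in> {1..n}. \<exists>j. (i, j) \<in> T"
    using stair_CNM_antidiagonal[OF stair] by (meson atLeastAtMost_iff)
  moreover have "\<forall>j \<in> {1..n}. \<exists>i. (i, j) \<in> T"
  proof
    fix j
    assume "j \<in> {1..n}"
    then have "1 \<le> Suc n - j" "Suc n - j \<le> n" "Suc n - (Suc n - j) = j"
      by auto
    then show "\<exists>i. (i, j) \<in> T"
      using stair_CNM_antidiagonal[OF stair, of "Suc n - j"] by metis
  qed
  moreover have "\<forall>p\<in>T. card (cnm_children T p) = 0 \<or> card (cnm_children T p) = 2"
    using children stair_CNM_children_inner stair_CNM_staircase[OF stair] by fastforce
  moreover have "cnm_leaves T = {(i, n + 1 - i) | i. 1 \<le> i \<and> i \<le> n}"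
    using children stair_CNM_antidiagonal[OF stair] stair_CNM_staircase[OF stair]
    by (fastforce simp: cnm_leaves_def)
  ultimately show ?thesis
    using stair_CNM_root stair_CNM_has_above_neq_has_left
    unfolding upper_diagonal_CNM_def is_CNM_def has_above_def has_left_def by blast
qed

end

lemma is_CNM_has_above_neq_has_left:
  "is_CNM n T \<Longrightarrow> (i, j) \<in> T \<Longrightarrow> (i, j) \<noteq> (1, 1) \<Longrightarrow> has_above T i j \<noteq> has_left T i j"
  unfolding is_CNM_def has_above_def has_left_def by auto

text \<open>A child has a larger coordinate sum than its parent, so a vertex with maximal coordinate
  sum is a leaf.\<close>
lemma is_CNM_weight_le_leaves:
  assumes CNM: "is_CNM n T" and leaves: "\<forall>(a, b) \<in> cnm_leaves T. a + b \<le> m" and "(a, b) \<in> T"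
  shows "a + b \<le> m"
proof -
  define M where "M = Max ((\<lambda>(c, d). c + d) ` T)"
  have "finite T"
    using CNM finite_subset by (auto simp: is_CNM_def)
  then have le_M: "c + d \<le> M" if "(c, d) \<in> T" for c d
    using that by (force simp: M_def intro: Max_ge)
  obtain a0 b0 where top: "(a0, b0) \<in> T" "a0 + b0 = M"
    using Max_in[of "(\<lambda>(c, d). c + d) ` T"] \<open>finite T\<close> \<open>(a, b) \<in> T\<close>
    unfolding M_def by fastforce
  have "M \<le> m"
  proof (rule ccontr)
    assume "\<not> M \<le> m"
    then have "cnm_children T (a0, b0) \<noteq> {}"
      using top leaves by (auto simp: cnm_leaves_def)
    then obtain c d where cd: "(c, d) \<in> T" "(c, d) \<noteq> (1, 1)" "cnm_parent T (c, d) = (a0, b0)"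
      by (auto simp: cnm_children_def)
    then have "has_above T c d \<or> has_left T c d"
      using is_CNM_has_above_neq_has_left[OF CNM] by blast
    then have "a0 + b0 < c + d"
      using cnm_parent_weight_less cd(3) by blast
    then show False
      using le_M[OF cd(1)] top(2) by simp
  qed
  then show ?thesis
    using le_M[OF \<open>(a, b) \<in> T\<close>] by simp
qed

lemma stair_CNM_if_upper_diagonal_CNM:
  assumes "upper_diagonal_CNM n T"
  shows "stair_CNM n {2..n} T"
proof -
  have CNM: "is_CNM n T" and box: "T \<subseteq> {1..n} \<times> {1..n}"
    and leaves: "cnm_leaves T = {(i, n + 1 - i) | i. 1 \<le> i \<and> i \<le> n}"
    using assms by (auto simp: upper_diagonal_CNM_def is_CNM_def)
  have "a + b \<le> Suc n" if "(a, b) \<in> T" for a b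
    using is_CNM_weight_le_leaves[OF CNM _ that] leaves by auto
  then have "T \<subseteq> staircase n"
    using box by (fastforce simp: staircase_def)
  moreover have "antidiagonal_filled n T"
    using leaves by (auto simp: antidiagonal_filled_def cnm_leaves_def)
  moreover have "unique_parent {2..n} T"
    unfolding unique_parent_def
  proof (intro allI impI)
    fix i j
    assume ij: "(i, j) \<in> T"
    show "(has_above T i j \<or> j \<notin> {2..n}) \<noteq> has_left T i j"
    proof (cases "j = 1")
      case True
      then have "\<not> has_left T i j"
        using box by (fastforce simp: has_left_def)
      with True show ?thesis by simp
    next
      case False
      then have "j \<in> {2..n}" "(i, j) \<noteq> (1, 1)"
        using ij box by auto
      then show ?thesis
        using is_CNM_has_above_neq_has_left[OF CNM ij] by simp
    qed
  qed
  ultimately show ?thesis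
    by (simp add: stair_CNM_def)
qed

theorem upper_diagonal_CNM_iff_stair_CNM:
  "1 \<le> n \<Longrightarrow> upper_diagonal_CNM n T \<longleftrightarrow> stair_CNM n {2..n} T"
  using stair_CNM_if_upper_diagonal_CNM upper_diagonal_CNM_if_stair_CNM by blast

section \<open>Deleting a row and a column through the second diagonal\<close>

definition skip :: "nat \<Rightarrow> nat \<Rightarrow> nat" where
  "skip t i = (if i \<le> t then i else Suc i)"

lemma skip_neq [simp]: "skip t i \<noteq> Suc t" "Suc t \<noteq> skip t i"
  by (simp_all add: skip_def)

lemma skip_less_iff [simp]: "skip t i < skip t i' \<longleftrightarrow> i < i'"
  by (auto simp: skip_def)

lemma skip_eq_iff [simp]: "skip t i = skip t i' \<longleftrightarrow> i = i'"
  by (auto simp: skip_def)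

lemma skip_surj: "x \<noteq> Suc t \<Longrightarrow> \<exists>i. x = skip t i"
  by (cases "x \<le> t") (auto simp: skip_def intro: exI[of _ "x - 1"])

text \<open>Insert a new row t+1 and a new column q+1 whose only vertices are (t+1, q) and (t, q+1).\<close>
definition expand :: "nat \<Rightarrow> nat \<Rightarrow> (nat \<times> nat) set \<Rightarrow> (nat \<times> nat) set" where
  "expand t q T = (\<lambda>(i, j). (skip t i, skip q j)) ` T \<union> {(Suc t, q), (t, Suc q)}"

definition contract :: "nat \<Rightarrow> nat \<Rightarrow> (nat \<times> nat) set \<Rightarrow> (nat \<times> nat) set" where
  "contract t q T = {(i, j). (skip t i, skip q j) \<in> T}"

lemma skip_mem_expand [simp]: "(skip t i, skip q j) \<in> expand t q T \<longleftrightarrow> (i, j) \<in> T"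
  by (auto simp: expand_def)

lemma contract_expand: "contract t q (expand t q T) = T"
  by (simp add: contract_def)

lemma all_expand:
  "(\<forall>x y. (x, y) \<in> expand t q T \<longrightarrow> P x y) \<longleftrightarrow>
    (\<forall>i j. (i, j) \<in> T \<longrightarrow> P (skip t i) (skip q j)) \<and> P (Suc t) q \<and> P t (Suc q)"
proof
  assume P: "\<forall>x y. (x, y) \<in> expand t q T \<longrightarrow> P x y"
  then have "P (skip t i) (skip q j)" if "(i, j) \<in> T" for i j
    using that by simp
  moreover have "P (Suc t) q" "P t (Suc q)"
    using P by (simp_all add: expand_def)
  ultimately show "(\<forall>i j. (i, j) \<in> T \<longrightarrow> P (skip t i) (skip q j)) \<and> P (Suc t) q \<and> P t (Suc q)"
    by blast
qed (auto simp: expand_def)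

lemma skip_self [simp]: "skip t t = t"
  by (simp add: skip_def)

lemma corner_mem_expand [simp]: "(t, q) \<in> expand t q T \<longleftrightarrow> (t, q) \<in> T"
  using skip_mem_expand[of t t q q T] by simp

context
  fixes m t q :: nat
  assumes t: "1 \<le> t" "t \<le> m" and tq: "t + q = Suc m"
begin

lemma skip_mem_staircase:
  "(skip t i, skip q j) \<in> staircase (Suc m) \<longleftrightarrow> (i, j) \<in> staircase m"
  using tq by (auto simp: skip_def staircase_def)

lemma staircase_expand: "expand t q T \<subseteq> staircase (Suc m) \<longleftrightarrow> T \<subseteq> staircase m"
proof -
  have "(Suc t, q) \<in> staircase (Suc m)" "(t, Suc q) \<in> staircase (Suc m)"
    using t tq by (auto simp: staircase_def)
  then show ?thesis
    using all_expand[of t q T "\<lambda>x y. (x, y) \<in> staircase (Suc m)"]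
    by (auto simp: subset_iff skip_mem_staircase)
qed

lemma all_antidiagonal_skip:
  "(\<forall>x. 1 \<le> x \<and> x \<le> Suc m \<longrightarrow> P x) \<longleftrightarrow>
    P t \<and> P (Suc t) \<and> (\<forall>i. 1 \<le> i \<and> i \<le> m \<and> i \<noteq> t \<longrightarrow> P (skip t i))"
proof -
  have "1 \<le> skip t i \<and> skip t i \<le> Suc m" if "1 \<le> i" "i \<le> m" for i
    using that by (simp add: skip_def)
  moreover have "\<exists>i. 1 \<le> i \<and> i \<le> m \<and> i \<noteq> t \<and> x = skip t i"
    if "1 \<le> x" "x \<le> Suc m" "x \<noteq> t" "x \<noteq> Suc t" for x
  proof (cases "x < t")
    case True
    then show ?thesis
      using that t by (intro exI[of _ x]) (auto simp: skip_def)
  next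
    case False
    then show ?thesis
      using that by (intro exI[of _ "x - 1"]) (auto simp: skip_def)
  qed
  ultimately show ?thesis
    using t by (metis Suc_le_mono le_SucI)
qed

lemma skip_antidiagonal: "i \<noteq> t \<Longrightarrow> i \<le> m \<Longrightarrow> Suc (Suc m) - skip t i = skip q (Suc m - i)"
  using tq by (auto simp: skip_def)

lemma antidiagonal_filled_expand:
  "antidiagonal_filled (Suc m) (expand t q T) \<longleftrightarrow>
    (\<forall>i. 1 \<le> i \<and> i \<le> m \<and> i \<noteq> t \<longrightarrow> (i, Suc m - i) \<in> T)"
proof -
  have "(t, Suc (Suc m) - t) \<in> expand t q T" "(Suc t, Suc (Suc m) - Suc t) \<in> expand t q T"
    using tq by (auto simp: expand_def)
  moreover have "(skip t i, Suc (Suc m) - skip t i) \<in> expand t q T \<longleftrightarrow> (i, Suc m - i) \<in> T"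
    if "i \<le> m" "i \<noteq> t" for i
    using that by (simp add: skip_antidiagonal)
  ultimately show ?thesis
    unfolding antidiagonal_filled_def all_antidiagonal_skip by auto
qed

text \<open>The new vertices cannot serve as above- or left-neighbours of old ones: those would lie
  beyond the antidiagonal of T.\<close>
lemma has_above_expand_skip:
  assumes "T \<subseteq> staircase m" "(i, j) \<in> T"
  shows "has_above (expand t q T) (skip t i) (skip q j) \<longleftrightarrow> has_above T i j"
proof
  assume "has_above (expand t q T) (skip t i) (skip q j)"
  then obtain x where x: "x < skip t i" "(x, skip q j) \<in> expand t q T"
    by (auto simp: has_above_def)
  show "has_above T i j"
  proof (cases "x = Suc t")
    case True
    then have "j = q" "t < i"
      using x by (auto simp: expand_def skip_def split: if_splits)
    then show ?thesis
      using assms tq by (auto simp: staircase_def)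
  next
    case False
    then obtain i' where "x = skip t i'"
      using skip_surj by blast
    with x show ?thesis
      by (auto simp: has_above_def)
  qed
next
  assume "has_above T i j"
  then show "has_above (expand t q T) (skip t i) (skip q j)"
    by (auto simp: has_above_def intro: exI[of _ "skip t _"])
qed

lemma has_left_expand_skip:
  assumes "T \<subseteq> staircase m" "(i, j) \<in> T"
  shows "has_left (expand t q T) (skip t i) (skip q j) \<longleftrightarrow> has_left T i j"
proof
  assume "has_left (expand t q T) (skip t i) (skip q j)"
  then obtain y where y: "y < skip q j" "(skip t i, y) \<in> expand t q T"
    by (auto simp: has_left_def)
  show "has_left T i j"
  proof (cases "y = Suc q")
    case True
    then have "i = t" "q < j"
      using y by (auto simp: expand_def skip_def split: if_splits)
    then show ?thesis
      using assms tq by (auto simp: staircase_def)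
  next
    case False
    then obtain j' where "y = skip q j'"
      using skip_surj by blast
    with y show ?thesis
      by (auto simp: has_left_def)
  qed
next
  assume "has_left T i j"
  then show "has_left (expand t q T) (skip t i) (skip q j)"
    by (auto simp: has_left_def intro: exI[of _ "skip q _"])
qed

lemma skip_mem_genuine_columns: "skip q j \<in> {2..Suc m} \<longleftrightarrow> j \<in> {2..m}"
  using t tq by (auto simp: skip_def)

lemma unique_parent_expand:
  assumes "T \<subseteq> staircase m" "(t, q) \<in> T"
  shows "unique_parent {2..Suc m} (expand t q T) \<longleftrightarrow> unique_parent {2..m} T"
proof -
  have row: "y = q" if "(Suc t, y) \<in> expand t q T" for y
    using that by (auto simp: expand_def)
  have column: "x = t" if "(x, Suc q) \<in> expand t q T" for x
    using that by (auto simp: expand_def skip_def split: if_splits)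
  have "(t, q) \<in> expand t q T"
    using assms(2) by simp
  then have "has_above (expand t q T) (Suc t) q" "has_left (expand t q T) t (Suc q)"
    by (auto simp: has_above_def has_left_def)
  moreover have "\<not> has_left (expand t q T) (Suc t) q" "\<not> has_above (expand t q T) t (Suc q)"
    using row column by (auto simp: has_above_def has_left_def)
  moreover have "Suc q \<in> {2..Suc m}"
    using t tq by auto
  ultimately show ?thesis
    unfolding unique_parent_def all_expand
    using assms(1)
    by (simp add: has_above_expand_skip has_left_expand_skip skip_mem_genuine_columns
        del: atLeastAtMost_iff)
qed

lemma stair_CNM_expand_iff:
  assumes "(t, q) \<in> T"
  shows "stair_CNM (Suc m) {2..Suc m} (expand t q T) \<longleftrightarrow> stair_CNM m {2..m} T"
proof -
  have "(t, Suc m - t) \<in> T"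
    using assms tq by (metis add_diff_cancel_left')
  then have "antidiagonal_filled m T \<longleftrightarrow> (\<forall>i. 1 \<le> i \<and> i \<le> m \<and> i \<noteq> t \<longrightarrow> (i, Suc m - i) \<in> T)"
    unfolding antidiagonal_filled_def by metis
  then show ?thesis
    using unique_parent_expand[OF _ assms]
    by (auto simp: stair_CNM_def staircase_expand antidiagonal_filled_expand)
qed

text \<open>A vertex (t, q) on the second diagonal forces the leaves (t+1, q) and (t, q+1)
  to be alone in their row and column respectively: (t+1, q) already has a vertex above,
  (t, q+1) one to its left, and anything further out lies beyond the antidiagonal.\<close>
lemma stair_CNM_second_diagonal_neighbours:
  assumes stair: "stair_CNM (Suc m) {2..Suc m} T" and tqT: "(t, q) \<in> T"
  shows "(Suc t, q) \<in> T" "(t, Suc q) \<in> T"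
    and "(Suc t, y) \<in> T \<Longrightarrow> y = q" "(x, Suc q) \<in> T \<Longrightarrow> x = t"
proof -
  have "Suc (Suc m) - Suc t = q" "Suc (Suc m) - t = Suc q"
    using tq by auto
  then show below: "(Suc t, q) \<in> T" and right: "(t, Suc q) \<in> T"
    using stair_CNM_antidiagonal[OF stair, of "Suc t"] stair_CNM_antidiagonal[OF stair, of t] t
    by simp_all
  have "has_above T (Suc t) q" "has_left T t (Suc q)" "Suc q \<in> {2..Suc m}"
    using tqT t tq by (auto simp: has_above_def has_left_def)
  then have "\<not> has_left T (Suc t) q" "\<not> has_above T t (Suc q)"
    using stair_CNM_unique_parent[OF stair below] stair_CNM_unique_parent[OF stair right] by auto
  show "y = q" if "(Suc t, y) \<in> T"
  proof -
    have "\<not> y < q"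
      using that \<open>\<not> has_left T (Suc t) q\<close> by (auto simp: has_left_def)
    then show ?thesis
      using stair_CNM_staircase[OF stair that] tq by simp
  qed
  show "x = t" if "(x, Suc q) \<in> T"
  proof -
    have "\<not> x < t"
      using that \<open>\<not> has_above T t (Suc q)\<close> by (auto simp: has_above_def)
    then show ?thesis
      using stair_CNM_staircase[OF stair that] tq by simp
  qed
qed

lemma expand_contract:
  assumes stair: "stair_CNM (Suc m) {2..Suc m} T" and tqT: "(t, q) \<in> T"
  shows "expand t q (contract t q T) = T"
proof -
  note neighbours = stair_CNM_second_diagonal_neighbours[OF stair tqT]
  show ?thesis
  proof (intro equalityI subsetI)
    fix p
    assume "p \<in> expand t q (contract t q T)"
    then show "p \<in> T"
      using neighbours(1,2) by (auto simp: expand_def contract_def)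
  next
    fix p
    assume p: "p \<in> T"
    obtain x y where xy: "p = (x, y)"
      by fastforce
    show "p \<in> expand t q (contract t q T)"
    proof (cases "x = Suc t \<or> y = Suc q")
      case True
      then show ?thesis
        using neighbours(3,4) p xy by (auto simp: expand_def)
    next
      case False
      then obtain i j where "x = skip t i" "y = skip q j"
        using skip_surj by metis
      then show ?thesis
        using p xy by (simp add: contract_def)
    qed
  qed
qed

lemma second_diagonal_mem_expand:
  assumes "1 \<le> i" "i < t"
  shows "(i, Suc m - i) \<in> expand t q T \<longleftrightarrow> i < t - 1 \<and> (i, m - i) \<in> T"
proof (cases "i < t - 1")
  case True
  then have "(i, Suc m - i) = (skip t i, skip q (m - i))"
    using assms tq by (auto simp: skip_def)
  then have "(i, Suc m - i) \<in> expand t q T \<longleftrightarrow> (i, m - i) \<in> T"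
    by (simp only: skip_mem_expand)
  with True show ?thesis
    by simp
next
  case False
  then have "Suc m - i = Suc q"
    using assms tq by auto
  then show ?thesis
    using assms False by (auto simp: expand_def)
qed

end

definition second_diagonal_free :: "nat \<Rightarrow> nat \<Rightarrow> (nat \<times> nat) set set" where
  "second_diagonal_free n t = {T. stair_CNM n {2..n} T \<and> (\<forall>i. 1 \<le> i \<and> i < t \<longrightarrow> (i, n - i) \<notin> T)}"

lemma second_diagonal_free_through:
  assumes t: "1 \<le> t" "t \<le> m"
  shows "{T \<in> second_diagonal_free (Suc m) t. (t, Suc m - t) \<in> T} =
    expand t (Suc m - t) ` second_diagonal_free m (t - 1)"
proof -
  define q where "q = Suc m - t"
  have tq: "t + q = Suc m"
    using t by (simp add: q_def)
  have avoid: "(\<forall>i. 1 \<le> i \<and> i < t \<longrightarrow> (i, Suc m - i) \<notin> expand t q T) \<longleftrightarrow>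
      (\<forall>i. 1 \<le> i \<and> i < t - 1 \<longrightarrow> (i, m - i) \<notin> T)" for T
    using second_diagonal_mem_expand[OF t tq] by (metis less_imp_diff_less less_le_trans diff_le_self)
  have through: "(t, q) \<in> T" if "stair_CNM m {2..m} T" for T
    using stair_CNM_antidiagonal[OF that t] tq by (metis add_diff_cancel_left')
  show ?thesis
    unfolding q_def[symmetric]
  proof (intro equalityI subsetI)
    fix T
    assume "T \<in> {T \<in> second_diagonal_free (Suc m) t. (t, q) \<in> T}"
    then have T: "stair_CNM (Suc m) {2..Suc m} T" "(t, q) \<in> T"
      "\<forall>i. 1 \<le> i \<and> i < t \<longrightarrow> (i, Suc m - i) \<notin> T"
      by (auto simp: second_diagonal_free_def)
    note T_eq = expand_contract[OF t tq T(1,2)]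
    have "(t, q) \<in> contract t q T"
      using T(2) by (simp add: contract_def)
    then have "stair_CNM m {2..m} (contract t q T)"
      using stair_CNM_expand_iff[OF t tq] T(1) T_eq by metis
    then have "contract t q T \<in> second_diagonal_free m (t - 1)"
      using T(3) avoid[of "contract t q T"] by (simp add: second_diagonal_free_def T_eq)
    then show "T \<in> expand t q ` second_diagonal_free m (t - 1)"
      using T_eq by (metis image_eqI)
  next
    fix T
    assume "T \<in> expand t q ` second_diagonal_free m (t - 1)"
    then obtain T' where T': "T = expand t q T'" "stair_CNM m {2..m} T'"
      "\<forall>i. 1 \<le> i \<and> i < t - 1 \<longrightarrow> (i, m - i) \<notin> T'"
      by (auto simp: second_diagonal_free_def)
    then show "T \<in> {T \<in> second_diagonal_free (Suc m) t. (t, q) \<in> T}"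
      using stair_CNM_expand_iff[OF t tq through[OF T'(2)]] through[OF T'(2)] avoid[of T']
      by (simp add: second_diagonal_free_def)
  qed
qed

lemma card_second_diagonal_free_Suc:
  assumes t: "1 \<le> t" "t \<le> m"
  shows "card (second_diagonal_free (Suc m) t) =
    card (second_diagonal_free (Suc m) (Suc t)) + card (second_diagonal_free m (t - 1))"
proof -
  let ?through = "{T \<in> second_diagonal_free (Suc m) t. (t, Suc m - t) \<in> T}"
  have split: "second_diagonal_free (Suc m) t = second_diagonal_free (Suc m) (Suc t) \<union> ?through"
    by (auto simp: second_diagonal_free_def less_Suc_eq)
  have "finite (second_diagonal_free (Suc m) (Suc t))" "finite ?through"
    using finite_stair_CNMs[of "Suc m" "{2..Suc m}"]
    by (auto simp: second_diagonal_free_def intro: finite_subset)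
  moreover have "second_diagonal_free (Suc m) (Suc t) \<inter> ?through = {}"
    using t by (auto simp: second_diagonal_free_def)
  ultimately have "card (second_diagonal_free (Suc m) t) =
      card (second_diagonal_free (Suc m) (Suc t)) + card ?through"
    unfolding arg_cong[OF split, of card] by (rule card_Un_disjoint)
  also have "card ?through = card (second_diagonal_free m (t - 1))"
    unfolding second_diagonal_free_through[OF t]
    by (rule card_image) (metis contract_expand inj_on_inverseI)
  finally show ?thesis .
qed

section \<open>The alternating sum\<close>

lemma prod_pred_atLeastAtMost: "(\<Prod>u\<in>{2..Suc n}. u - 1) = fact n"
proof (induction n)
  case (Suc n)
  have "{2..Suc (Suc n)} = insert (Suc (Suc n)) {2..Suc n}"
    by auto
  with Suc show ?case
    by simp
qed simp

lemma card_second_diagonal_free_le_1: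
  assumes "t \<le> 1"
  shows "card (second_diagonal_free (Suc m) t) = fact m"
proof -
  have "second_diagonal_free (Suc m) t = {T. stair_CNM (Suc m) {2..Suc m} T}"
    using assms by (auto simp: second_diagonal_free_def)
  moreover have "card {T. stair_CNM (Suc m) {2..Suc m} T} = (\<Prod>u\<in>{2..Suc m}. u - 1)"
    by (rule card_stair_CNM) auto
  ultimately show ?thesis
    by (simp only: prod_pred_atLeastAtMost)
qed

definition alternating_sum :: "nat \<Rightarrow> nat \<Rightarrow> int" where
  "alternating_sum n t = (\<Sum>j = 0..t. int ((t - j) choose j) * (-1) ^ j * int (fact (n - 1 - j)))"

lemma alternating_sum_le_1: "t \<le> 1 \<Longrightarrow> alternating_sum n t = int (fact (n - 1))"
  by (cases t) (simp_all add: alternating_sum_def)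

lemma choose_Suc_diff:
  "(Suc s - l) choose (Suc l) = ((s - l) choose l) + ((s - l) choose (Suc l))"
proof (cases "l \<le> s")
  case True
  then have "Suc s - l = Suc (s - l)"
    by simp
  then show ?thesis
    by simp
qed simp

lemma alternating_sum_Suc_Suc:
  "alternating_sum (Suc m) (Suc (Suc s)) = alternating_sum (Suc m) (Suc s) - alternating_sum m s"
proof -
  define g where "g l = int ((s - l) choose (Suc l)) * (-1) ^ Suc l * int (fact (m - Suc l))" for l
  define h where "h l = int ((s - l) choose l) * (-1) ^ Suc l * int (fact (m - Suc l))" for l
  have "alternating_sum (Suc m) (Suc (Suc s)) = int (fact m) +
      (\<Sum>l = 0..Suc s. int ((Suc s - l) choose (Suc l)) * (-1) ^ Suc l * int (fact (m - Suc l)))"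
    unfolding alternating_sum_def by (subst sum.atLeast0_atMost_Suc_shift) simp
  also have "\<dots> = int (fact m) + (\<Sum>l = 0..s. g l + h l)"
    by (simp add: sum.atLeast0_atMost_Suc choose_Suc_diff g_def h_def algebra_simps)
  also have "\<dots> = int (fact m) + (\<Sum>l = 0..s. g l) + (\<Sum>l = 0..s. h l)"
    by (simp add: sum.distrib)
  moreover have "alternating_sum (Suc m) (Suc s) = int (fact m) + (\<Sum>l = 0..s. g l)"
    unfolding alternating_sum_def g_def by (subst sum.atLeast0_atMost_Suc_shift) simp
  moreover have "alternating_sum m s = - (\<Sum>l = 0..s. h l)"
    by (simp add: alternating_sum_def h_def sum_negf[symmetric])
  ultimately show ?thesis
    by linarith
qed

lemma int_card_second_diagonal_free:
  "t \<le> Suc m \<Longrightarrow> int (card (second_diagonal_free (Suc m) t)) = alternating_sum (Suc m) t"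
proof (induction m arbitrary: t)
  case 0
  then show ?case
    by (simp add: card_second_diagonal_free_le_1 alternating_sum_le_1)
next
  case (Suc m)
  from Suc.prems show ?case
  proof (induction t rule: induct_nat_012)
    case (ge2 s)
    have "card (second_diagonal_free (Suc (Suc m)) (Suc s)) =
        card (second_diagonal_free (Suc (Suc m)) (Suc (Suc s))) + card (second_diagonal_free (Suc m) s)"
      using card_second_diagonal_free_Suc[of "Suc s" "Suc m"] ge2.prems by simp
    then show ?case
      using ge2.IH(2) Suc.IH[of s] ge2.prems alternating_sum_Suc_Suc[of "Suc m" s] by simp
  qed (simp_all add: card_second_diagonal_free_le_1 alternating_sum_le_1 del: fact_Suc)
qed

theorem theorem4p11:
  fixes n :: nat
  assumes "n \<ge> 2"
  shows "int (f_second_diag n) =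
    (\<Sum>j = 0..n - 1. int ((n - j) choose j) * (-1) ^ j * int (fact (n - 1 - j)))"
proof -
  obtain m where n: "n = Suc m"
    using assms by (cases n) auto
  have "f_second_diag n = card (second_diagonal_free n n)"
    unfolding f_second_diag_def second_diagonal_free_def
    using upper_diagonal_CNM_iff_stair_CNM[of n] assms
    by (intro arg_cong[where f = card] Collect_cong) auto
  also have "int \<dots> = alternating_sum n n"
    using int_card_second_diagonal_free[of n m] n by simp
  also have "\<dots> = (\<Sum>j = 0..n - 1. int ((n - j) choose j) * (-1) ^ j * int (fact (n - 1 - j)))"
    unfolding alternating_sum_def n by (subst sum.atLeast0_atMost_Suc) simp
  finally show ?thesis .
qed

end
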